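(* Let $d \ge 1$ and $\rho \ge 0$ be integers. For every collection of $\rho$ pairwise incomparable points $r^{(1)}, \dots, r^{(\rho)} \in (0,1)^d$ whose $d\rho$ coordinates are all distinct, the number $\gamma$ of generators of their record-setting region satisfies $\gamma \ge (d-1)\rho + 1$. Moreover, for every $d\ge 1$ and $\rho \ge 0$ for which such a collection of $\rho$ points exists, there is such a collection with $\gamma = (d-1)\rho + 1$; thus $(d-1)\rho+1$ is the smallest possible number of generators.
   Context: For $x,y \in \mathbb{R}^d$, $x \prec y$ means $x_j < y_j$ for all $j \in [d]$, and $x \le y$ means $x_j \le y_j$ for all $j$; points are incomparable if neither is $\le$ the other. The record-setting region of points $r^{(1)},\dots,r^{(\rho)}$ is $S := \{x \in [0,1)^d : x \not\prec r^{(i)} \text{ for all } i \in [\rho]\}$ (so for $\rho=0$, $S=[0,1)^d$), and its generators are the minimal elements of $S$ with respect to $\le$. *)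

theory Defs
  imports "HOL-Analysis.Analysis"
begin

text \<open>Points of R^d are vectors real^'n, with d = CARD('n).\<close>

definition vle :: "real^'n \<Rightarrow> real^'n \<Rightarrow> bool" where
  "vle x y \<longleftrightarrow> (\<forall>j. x $ j \<le> y $ j)"

definition vlt :: "real^'n \<Rightarrow> real^'n \<Rightarrow> bool" where
  "vlt x y \<longleftrightarrow> (\<forall>j. x $ j < y $ j)"

definition record_region :: "nat \<Rightarrow> (nat \<Rightarrow> real^'n) \<Rightarrow> (real^'n) set" where
  "record_region rho r =
     {x. (\<forall>j. 0 \<le> x $ j \<and> x $ j < 1) \<and> (\<forall>i<rho. \<not> vlt x (r i))}"

definition generators :: "(real^'n) set \<Rightarrow> (real^'n) set" where
  "generators S = {x \<in> S. \<forall>y\<in>S. vle y x \<longrightarrow> y = x}"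

definition admissible :: "nat \<Rightarrow> (nat \<Rightarrow> real^'n) \<Rightarrow> bool" where
  "admissible rho r \<longleftrightarrow>
     (\<forall>i<rho. \<forall>j. 0 < r i $ j \<and> r i $ j < 1) \<and>
     (\<forall>i<rho. \<forall>i'<rho. i \<noteq> i' \<longrightarrow> \<not> vle (r i) (r i')) \<and>
     (\<forall>i<rho. \<forall>i'<rho. \<forall>j j'. (i, j) \<noteq> (i', j') \<longrightarrow> r i $ j \<noteq> r i' $ j')"

end

theory Submission
  imports Defs
begin

text \<open>Every generator x is tight: each positive coordinate x_k equals r i $ k for a point
  r i that strictly exceeds x in all other coordinates, since otherwise x_k could be lowered.

  Lower bound: fix a coordinate j0. For a point r m and j \<noteq> j0, let h be the largest
  coordinate value below r m $ j0. A point minimal in the slice x_{j0} = h under the box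
  that touches r m only in coordinate j lifts to a generator g with g_j = r m $ j, and the
  tight witnesses of g off j0 all lie above r m in coordinate j0. This forces the map
  (m, j) \<mapsto> g to be injective; a generator on the j0-axis is one more.

  Upper bound: if all coordinates except j1 order the points in the same way, two tight
  witnesses of one generator in two coordinates off j1 would contradict each other, so a
  generator has at most one positive coordinate off j1, and it is determined by that
  coordinate and its witness.\<close>

lemma vle_iff_less_eq [simp]: "vle x y \<longleftrightarrow> x \<le> y"
  by (simp add: vle_def less_eq_vec_def)

lemma mem_generators: "x \<in> generators S \<longleftrightarrow> x \<in> S \<and> (\<forall>y\<in>S. y \<le> x \<longrightarrow> y = x)"
  by (simp add: generators_def)

lemma generators_eq_if_agree_off:
  assumes "x \<in> generators S" "y \<in> generators S" "\<forall>l. l \<noteq> j \<longrightarrow> x $ l = y $ l"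
  shows "x = y"
proof (cases "x $ j \<le> y $ j")
  case True
  then have "x \<le> y" using assms(3) by (auto simp: less_eq_vec_def)
  then show ?thesis using assms(1,2) by (simp add: mem_generators)
next
  case False
  have "y $ l \<le> x $ l" for l using False assms(3) by (cases "l = j") auto
  then have "y \<le> x" by (simp add: less_eq_vec_def)
  then show ?thesis using assms(1,2) by (metis mem_generators)
qed

lemma mem_record_region:
  "x \<in> record_region rho r \<longleftrightarrow>
     (\<forall>j. 0 \<le> x $ j \<and> x $ j < 1) \<and> (\<forall>i<rho. \<exists>j. r i $ j \<le> x $ j)"
  by (auto simp: record_region_def vlt_def not_less)

lemma record_region_nonneg: "x \<in> record_region rho r \<Longrightarrow> 0 \<le> x $ j"
  by (simp add: mem_record_region)

lemma record_region_upward: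
  assumes "x \<in> record_region rho r" "x \<le> y" "\<forall>j. y $ j < 1"
  shows "y \<in> record_region rho r"
proof -
  have "x $ j \<le> y $ j" for j using assms(2) by (simp add: less_eq_vec_def)
  then show ?thesis using assms(1,3) unfolding mem_record_region by (meson order_trans)
qed

definition coord_values :: "nat \<Rightarrow> (nat \<Rightarrow> real^'n) \<Rightarrow> 'n \<Rightarrow> real set" where
  "coord_values rho r j = insert 0 ((\<lambda>i. r i $ j) ` {..<rho})"

lemma finite_coord_values [simp]: "finite (coord_values rho r j)"
  by (simp add: coord_values_def)

lemma zero_in_coord_values [simp]: "0 \<in> coord_values rho r j"
  by (simp add: coord_values_def)

lemma coord_in_coord_values [simp]: "i < rho \<Longrightarrow> r i $ j \<in> coord_values rho r j"
  by (simp add: coord_values_def)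

lemma Max_filter:
  fixes V :: "'a::linorder set"
  assumes "finite V" "v \<in> V" "P v"
  shows "Max {w \<in> V. P w} \<in> V" "P (Max {w \<in> V. P w})"
    and "\<And>u. u \<in> V \<Longrightarrow> P u \<Longrightarrow> u \<le> Max {w \<in> V. P w}"
proof -
  have "Max {w \<in> V. P w} \<in> {w \<in> V. P w}"
    by (rule Max_in) (use assms in auto)
  then show "Max {w \<in> V. P w} \<in> V" "P (Max {w \<in> V. P w})" by auto
  show "u \<le> Max {w \<in> V. P w}" if "u \<in> V" "P u" for u
    by (rule Max_ge) (use assms that in auto)
qed

definition grid :: "nat \<Rightarrow> (nat \<Rightarrow> real^'n) \<Rightarrow> (real^'n) set" where
  "grid rho r = {x. \<forall>j. x $ j \<in> coord_values rho r j}"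

lemma finite_grid: "finite (grid rho r)"
proof -
  have "grid rho r \<subseteq> (\<lambda>f. \<chi> j. f j) ` Pi\<^sub>E UNIV (coord_values rho r)"
  proof
    fix x assume "x \<in> grid rho r"
    then have "(\<lambda>j. x $ j) \<in> Pi\<^sub>E UNIV (coord_values rho r)" by (auto simp: grid_def PiE_iff)
    then show "x \<in> (\<lambda>f. \<chi> j. f j) ` Pi\<^sub>E UNIV (coord_values rho r)"
      by (rule rev_image_eqI) simp
  qed
  moreover have "finite (Pi\<^sub>E UNIV (coord_values rho r))" by (simp add: finite_PiE)
  ultimately show ?thesis by (rule finite_subset[OF _ finite_imageI])
qed

definition grid_round :: "nat \<Rightarrow> (nat \<Rightarrow> real^'n) \<Rightarrow> real^'n \<Rightarrow> real^'n" where
  "grid_round rho r x = (\<chi> j. Max {v \<in> coord_values rho r j. v \<le> x $ j})"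

lemma
  assumes "x \<in> record_region rho r"
  shows grid_round_in_grid: "grid_round rho r x \<in> grid rho r"
    and grid_round_le: "grid_round rho r x \<le> x"
    and grid_round_in_record_region: "grid_round rho r x \<in> record_region rho r"
proof -
  have below: "Max {v \<in> coord_values rho r j. v \<le> x $ j} \<in> coord_values rho r j"
    "Max {v \<in> coord_values rho r j. v \<le> x $ j} \<le> x $ j"
    "\<And>u. u \<in> coord_values rho r j \<Longrightarrow> u \<le> x $ j \<Longrightarrow> u \<le> Max {v \<in> coord_values rho r j. v \<le> x $ j}"
    for j using Max_filter[of "coord_values rho r j" 0 "\<lambda>v. v \<le> x $ j"]
      record_region_nonneg[OF assms] by auto
  show "grid_round rho r x \<in> grid rho r"
    using below(1) by (simp add: grid_round_def grid_def)
  have le: "grid_round rho r x $ j \<le> x $ j" for j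
    using below(2) by (simp add: grid_round_def)
  then show "grid_round rho r x \<le> x" by (simp add: less_eq_vec_def)
  have "0 \<le> grid_round rho r x $ j \<and> grid_round rho r x $ j < 1" for j
  proof -
    have "0 \<le> x $ j" "x $ j < 1" using assms by (simp_all add: mem_record_region)
    then show ?thesis using below(3)[OF zero_in_coord_values] le[of j] by (simp add: grid_round_def)
  qed
  moreover have "\<exists>j. r i $ j \<le> grid_round rho r x $ j" if i: "i < rho" for i
  proof -
    obtain j where "r i $ j \<le> x $ j" using assms i by (auto simp: mem_record_region)
    then show ?thesis using below(3)[OF coord_in_coord_values[OF i]] by (auto simp: grid_round_def)
  qed
  ultimately show "grid_round rho r x \<in> record_region rho r"
    unfolding mem_record_region by blast
qed

lemma grid_round_coord_eq:
  assumes "x $ j \<in> coord_values rho r j"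
  shows "grid_round rho r x $ j = x $ j"
  unfolding grid_round_def vec_lambda_beta by (rule Max_eqI) (use assms in auto)

lemma exists_minimal_below:
  assumes closed: "\<And>y. y \<in> record_region rho r \<Longrightarrow> C y \<Longrightarrow> C (grid_round rho r y)"
    and x: "x \<in> record_region rho r" "C x"
  shows "\<exists>z \<in> record_region rho r. C z \<and> z \<le> x \<and>
           (\<forall>y \<in> record_region rho r. C y \<longrightarrow> y \<le> z \<longrightarrow> y = z)"
proof -
  let ?R = "record_region rho r"
  define F where "F = {w \<in> grid rho r \<inter> ?R. C w}"
  have round_in_F: "grid_round rho r y \<in> F" if "y \<in> ?R" "C y" for y
    using closed[OF that] grid_round_in_grid[OF that(1)] grid_round_in_record_region[OF that(1)]
    by (simp add: F_def)
  have "finite F" unfolding F_def by (rule finite_subset[OF _ finite_grid]) auto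
  then obtain z where z: "z \<in> F" "z \<le> grid_round rho r x" and zmin: "\<forall>w\<in>F. w \<le> z \<longrightarrow> z = w"
    using finite_has_minimal2 round_in_F[OF x] by blast
  have "y = z" if y: "y \<in> ?R" "C y" "y \<le> z" for y
  proof -
    have "grid_round rho r y \<le> z" using grid_round_le[OF y(1)] y(3) by (rule order_trans)
    then have "grid_round rho r y = z" using zmin round_in_F[OF y(1,2)] by auto
    then show "y = z" using grid_round_le[OF y(1)] y(3) by simp
  qed
  moreover have "z \<le> x" using z(2) grid_round_le[OF x(1)] by (rule order_trans)
  ultimately show ?thesis using z(1) by (auto simp: F_def)
qed

lemma exists_generator_below:
  assumes "x \<in> record_region rho r"
  shows "\<exists>g \<in> generators (record_region rho r). g \<le> x"
  using exists_minimal_below[of rho r "\<lambda>_. True" x] assms by (auto simp: mem_generators)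

lemma exists_slice_minimal_below:
  assumes "x \<in> record_region rho r" "x $ j0 \<in> coord_values rho r j0"
  shows "\<exists>z \<in> record_region rho r. z \<le> x \<and> z $ j0 = x $ j0 \<and>
           (\<forall>y \<in> record_region rho r. y \<le> z \<longrightarrow> y $ j0 = z $ j0 \<longrightarrow> y = z)"
proof -
  let ?C = "\<lambda>y. y \<le> x \<and> y $ j0 = x $ j0"
  have "?C (grid_round rho r y)" if "y \<in> record_region rho r" "?C y" for y
  proof
    show "grid_round rho r y \<le> x" using grid_round_le[OF that(1)] that(2) by (blast intro: order.trans)
    show "grid_round rho r y $ j0 = x $ j0" using that(2) assms(2) by (simp add: grid_round_coord_eq)
  qed
  from exists_minimal_below[of rho r ?C, OF this assms(1)]
  obtain z where z: "z \<in> record_region rho r" "?C z" "z \<le> x"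
    and zmin: "\<forall>y \<in> record_region rho r. ?C y \<longrightarrow> y \<le> z \<longrightarrow> y = z" by auto
  have "?C y" if "y \<le> z" "y $ j0 = z $ j0" for y
    using order.trans[OF that(1) z(3)] that(2) z(2) by simp
  then show ?thesis using z zmin by blast
qed

text \<open>Without such an i, lowering coordinate k to the next coordinate value below keeps the
  point in the region.\<close>
lemma tight_coordinate:
  assumes z: "z \<in> record_region rho r" and pos: "0 < z $ k"
    and zmin: "\<And>y. y \<in> record_region rho r \<Longrightarrow> y \<le> z \<Longrightarrow> \<forall>l. l \<noteq> k \<longrightarrow> y $ l = z $ l \<Longrightarrow> y = z"
  shows "\<exists>i<rho. z $ k = r i $ k \<and> (\<forall>l. l \<noteq> k \<longrightarrow> z $ l < r i $ l)"
proof (rule ccontr)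
  assume no_witness: "\<not> ?thesis"
  define v where "v = Max {w \<in> coord_values rho r k. w < z $ k}"
  have v: "v \<in> coord_values rho r k" "v < z $ k" "0 \<le> v"
    and v_ge: "\<And>i. i < rho \<Longrightarrow> r i $ k < z $ k \<Longrightarrow> r i $ k \<le> v"
    using Max_filter[of "coord_values rho r k" 0 "\<lambda>w. w < z $ k"] pos unfolding v_def by auto
  define y where "y = (\<chi> l. if l = k then v else z $ l)"
  have z_bounds: "0 \<le> z $ l" "z $ l < 1" for l using z by (simp_all add: mem_record_region)
  have "0 \<le> y $ l \<and> y $ l < 1" for l
    using z_bounds[of l] z_bounds[of k] v(2,3) by (simp add: y_def)
  moreover have "\<exists>l. r i $ l \<le> y $ l" if i: "i < rho" for i
  proof -
    obtain l where l: "r i $ l \<le> z $ l" using z i by (auto simp: mem_record_region)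
    show ?thesis
    proof (cases "l = k")
      case False
      then show ?thesis using l by (intro exI[of _ l]) (simp add: y_def)
    next
      case True
      show ?thesis
      proof (cases "r i $ k < z $ k")
        case True
        then show ?thesis using v_ge[OF i] by (intro exI[of _ k]) (simp add: y_def)
      next
        case False
        then have "z $ k = r i $ k" using l \<open>l = k\<close> by simp
        then obtain l' where "l' \<noteq> k" "r i $ l' \<le> z $ l'" using no_witness i by (auto simp: not_less)
        then show ?thesis by (intro exI[of _ l']) (simp add: y_def)
      qed
    qed
  qed
  ultimately have "y \<in> record_region rho r" by (simp add: mem_record_region)
  moreover have "y \<le> z" using v(2) by (simp add: y_def less_eq_vec_def)
  ultimately have "y = z" using zmin by (simp add: y_def)
  moreover have "y $ k = v" by (simp add: y_def)
  ultimately show False using v(2) by simp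
qed

lemma generator_tight:
  assumes "x \<in> generators (record_region rho r)" "0 < x $ k"
  shows "\<exists>i<rho. x $ k = r i $ k \<and> (\<forall>l. l \<noteq> k \<longrightarrow> x $ l < r i $ l)"
  using assms by (intro tight_coordinate) (auto simp: mem_generators)

lemma generators_subset_grid: "generators (record_region rho r) \<subseteq> grid rho r"
proof
  fix x assume x: "x \<in> generators (record_region rho r)"
  have "x $ k \<in> coord_values rho r k" for k
  proof (cases "x $ k = 0")
    case False
    have "0 \<le> x $ k" using x record_region_nonneg[of x rho r k] by (simp add: mem_generators)
    with False have "0 < x $ k" by simp
    then obtain i where "i < rho" "x $ k = r i $ k" using generator_tight[OF x] by blast
    then show ?thesis by simp
  qed simp
  then show "x \<in> grid rho r" by (simp add: grid_def)
qed

lemma finite_generators: "finite (generators (record_region rho r))"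
  using finite_grid generators_subset_grid by (rule finite_subset[rotated])

lemma slice_minimal_tight:
  assumes "z \<in> record_region rho r"
    and "\<forall>y \<in> record_region rho r. y \<le> z \<longrightarrow> y $ j0 = z $ j0 \<longrightarrow> y = z"
    and "k \<noteq> j0" "0 < z $ k"
  shows "\<exists>i<rho. z $ k = r i $ k \<and> (\<forall>l. l \<noteq> k \<longrightarrow> z $ l < r i $ l)"
proof (rule tight_coordinate)
  fix y assume "y \<in> record_region rho r" "y \<le> z" "\<forall>l. l \<noteq> k \<longrightarrow> y $ l = z $ l"
  then show "y = z" using assms(2,3) by auto
qed (use assms in auto)

text \<open>Raising coordinate j0 of a generator below z back to z $ j0 stays in the region and
  under z, so by slice minimality it recovers z.\<close>
lemma generator_from_slice_minimal:
  assumes z: "z \<in> record_region rho r"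
    and zmin: "\<forall>y \<in> record_region rho r. y \<le> z \<longrightarrow> y $ j0 = z $ j0 \<longrightarrow> y = z"
  shows "\<exists>g \<in> generators (record_region rho r). \<forall>l. l \<noteq> j0 \<longrightarrow> g $ l = z $ l"
proof -
  obtain g where g: "g \<in> generators (record_region rho r)" "g \<le> z"
    using exists_generator_below[OF z] by blast
  define g' where "g' = (\<chi> l. if l = j0 then z $ j0 else g $ l)"
  have g'_j0: "g' $ j0 = z $ j0" and g'_off: "\<And>l. l \<noteq> j0 \<Longrightarrow> g' $ l = g $ l"
    by (simp_all add: g'_def)
  have "g \<le> g'" "g' \<le> z" using g(2) by (auto simp: g'_def less_eq_vec_def)
  moreover have "\<forall>l. g' $ l < 1"
    using z g(1) by (simp add: g'_def mem_generators mem_record_region)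
  moreover have "g \<in> record_region rho r" using g(1) by (simp add: mem_generators)
  ultimately have "g' \<in> record_region rho r" using record_region_upward by blast
  with zmin \<open>g' \<le> z\<close> g'_j0 have "g' = z" by blast
  then show ?thesis using g(1) g'_off by metis
qed

lemma admissible_coord_bounds:
  "admissible rho r \<Longrightarrow> i < rho \<Longrightarrow> 0 < r i $ l \<and> r i $ l < 1"
  by (simp add: admissible_def)

lemma admissible_coord_inj:
  "admissible rho r \<Longrightarrow> i < rho \<Longrightarrow> i' < rho \<Longrightarrow> r i $ l = r i' $ l' \<Longrightarrow> i = i' \<and> l = l'"
  unfolding admissible_def by blast

definition anchored_generator :: "nat \<Rightarrow> (nat \<Rightarrow> real^'n) \<Rightarrow> 'n \<Rightarrow> nat \<Rightarrow> 'n \<Rightarrow> real^'n \<Rightarrow> bool" where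
  "anchored_generator rho r j0 m j g \<longleftrightarrow>
     g \<in> generators (record_region rho r) \<and> g $ j = r m $ j \<and>
     (\<forall>k. k \<noteq> j \<longrightarrow> k \<noteq> j0 \<longrightarrow> g $ k < r m $ k) \<and>
     (\<forall>k. k \<noteq> j0 \<longrightarrow> 0 < g $ k \<longrightarrow> (\<exists>i<rho. g $ k = r i $ k \<and> r m $ j0 \<le> r i $ j0))"

lemma anchored_start_point:
  assumes adm: "admissible rho r" and m: "m < rho" and j: "j \<noteq> j0"
    and h: "0 \<le> h" "h < r m $ j0" "\<And>i. i < rho \<Longrightarrow> r i $ j0 < r m $ j0 \<Longrightarrow> r i $ j0 \<le> h"
  shows "\<exists>x \<in> record_region rho r. x $ j0 = h \<and> x $ j = r m $ j \<and>
           (\<forall>k. k \<noteq> j \<longrightarrow> k \<noteq> j0 \<longrightarrow> x $ k < r m $ k)"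
proof -
  define below where "below k = Max {v \<in> coord_values rho r k. v < r m $ k}" for k
  have below: "0 \<le> below k" "below k < r m $ k"
    "\<And>i. i < rho \<Longrightarrow> r i $ k < r m $ k \<Longrightarrow> r i $ k \<le> below k" for k
    using Max_filter[of "coord_values rho r k" 0 "\<lambda>v. v < r m $ k"]
      admissible_coord_bounds[OF adm m, of k] unfolding below_def by auto
  define x where "x = (\<chi> l. if l = j0 then h else if l = j then r m $ j else below l)"
  have "0 \<le> x $ l \<and> x $ l < 1" for l
    using h(1,2) below(1,2)[of l] admissible_coord_bounds[OF adm m, of l]
      admissible_coord_bounds[OF adm m, of j0] by (auto simp: x_def)
  moreover have "\<exists>l. r i $ l \<le> x $ l" if i: "i < rho" for i
  proof (cases "r i $ j0 < r m $ j0")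
    case True
    then show ?thesis using h(3)[OF i] by (intro exI[of _ j0]) (simp add: x_def)
  next
    case not_below: False
    show ?thesis
    proof (cases "i = m")
      case True
      then show ?thesis using j by (intro exI[of _ j]) (simp add: x_def)
    next
      case False
      then have "\<not> r m \<le> r i" using adm m i by (simp add: admissible_def)
      then obtain l where l: "r i $ l < r m $ l" by (auto simp: less_eq_vec_def not_le)
      then have "l \<noteq> j0" using not_below by auto
      then show ?thesis
        using l below(3)[OF i l] by (intro exI[of _ l]) (auto simp: x_def)
    qed
  qed
  ultimately have "x \<in> record_region rho r" by (simp add: mem_record_region)
  then show ?thesis using j below(2) by (intro bexI[of _ x]) (auto simp: x_def)
qed

lemma anchored_generator_exists:
  assumes adm: "admissible rho r" and m: "m < rho" and j: "j \<noteq> j0"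
  shows "\<exists>g. anchored_generator rho r j0 m j g"
proof -
  define h where "h = Max {v \<in> coord_values rho r j0. v < r m $ j0}"
  have h: "h \<in> coord_values rho r j0" "h < r m $ j0" "0 \<le> h"
    "\<And>i. i < rho \<Longrightarrow> r i $ j0 < r m $ j0 \<Longrightarrow> r i $ j0 \<le> h"
    using Max_filter[of "coord_values rho r j0" 0 "\<lambda>v. v < r m $ j0"]
      admissible_coord_bounds[OF adm m, of j0] unfolding h_def by auto
  obtain x where x: "x \<in> record_region rho r" "x $ j0 = h" "x $ j = r m $ j"
    "\<forall>k. k \<noteq> j \<longrightarrow> k \<noteq> j0 \<longrightarrow> x $ k < r m $ k"
    using anchored_start_point[OF adm m j h(3,2,4)] by blast
  obtain z where z: "z \<in> record_region rho r" "z \<le> x" "z $ j0 = h"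
    and zmin: "\<forall>y \<in> record_region rho r. y \<le> z \<longrightarrow> y $ j0 = z $ j0 \<longrightarrow> y = z"
    using exists_slice_minimal_below[of x rho r j0] x(1,2) h(1) by auto
  have z_le: "z $ k \<le> x $ k" for k using z(2) by (simp add: less_eq_vec_def)
  have z_below: "z $ k < r m $ k" if "k \<noteq> j" for k
  proof (cases "k = j0")
    case True
    then show ?thesis using z(3) h(2) by simp
  next
    case False
    then have "x $ k < r m $ k" using x(4) that by blast
    then show ?thesis using z_le[of k] by linarith
  qed
  have zj: "z $ j = r m $ j"
  proof -
    obtain l where l: "r m $ l \<le> z $ l" using z(1) m by (auto simp: mem_record_region)
    have "l = j"
    proof (rule ccontr)
      assume "l \<noteq> j"
      then have "z $ l < r m $ l" by (rule z_below)
      with l show False by simp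
    qed
    then show ?thesis using l z_le[of j] x(3) by simp
  qed
  have tight: "\<exists>i<rho. z $ k = r i $ k \<and> r m $ j0 \<le> r i $ j0" if k: "k \<noteq> j0" "0 < z $ k" for k
  proof -
    obtain i where i: "i < rho" "z $ k = r i $ k" "\<forall>l. l \<noteq> k \<longrightarrow> z $ l < r i $ l"
      using slice_minimal_tight[OF z(1) zmin k] by blast
    have "z $ j0 < r i $ j0" using i(3) k(1) by simp
    have "\<not> r i $ j0 < r m $ j0"
    proof
      assume "r i $ j0 < r m $ j0"
      then have "r i $ j0 \<le> h" by (rule h(4)[OF i(1)])
      with \<open>z $ j0 < r i $ j0\<close> z(3) show False by simp
    qed
    then show ?thesis using i(1,2) by (auto simp: not_less)
  qed
  obtain g where g: "g \<in> generators (record_region rho r)" "\<forall>l. l \<noteq> j0 \<longrightarrow> g $ l = z $ l"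
    using generator_from_slice_minimal[OF z(1) zmin] by blast
  have "anchored_generator rho r j0 m j g"
    unfolding anchored_generator_def
  proof (intro conjI allI impI)
    show "g \<in> generators (record_region rho r)" by (fact g(1))
    show "g $ j = r m $ j" using g(2) j zj by simp
  next
    fix k assume "k \<noteq> j" "k \<noteq> j0"
    then show "g $ k < r m $ k" using g(2) z_below by simp
  next
    fix k assume "k \<noteq> j0" "0 < g $ k"
    then show "\<exists>i<rho. g $ k = r i $ k \<and> r m $ j0 \<le> r i $ j0" using g(2) tight by simp
  qed
  then show ?thesis ..
qed

lemma anchored_generator_le:
  assumes adm: "admissible rho r" and g: "anchored_generator rho r j0 m j g"
    and m': "m' < rho" and j': "j' \<noteq> j0" "g $ j' = r m' $ j'"
  shows "r m $ j0 \<le> r m' $ j0"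
proof -
  have "0 < g $ j'" using admissible_coord_bounds[OF adm m'] j'(2) by simp
  then obtain i where "i < rho" "g $ j' = r i $ j'" "r m $ j0 \<le> r i $ j0"
    using g j'(1) by (auto simp: anchored_generator_def)
  moreover from this have "i = m'" using admissible_coord_inj[OF adm _ m'] j'(2) by metis
  ultimately show ?thesis by simp
qed

lemma anchored_generator_inj:
  assumes adm: "admissible rho r"
    and g: "anchored_generator rho r j0 m j g" and g': "anchored_generator rho r j0 m' j' g"
    and "m < rho" "m' < rho" "j \<noteq> j0" "j' \<noteq> j0"
  shows "m = m' \<and> j = j'"
proof -
  have gj: "g $ j = r m $ j" "g $ j' = r m' $ j'"
    using g g' by (simp_all add: anchored_generator_def)
  have "r m $ j0 = r m' $ j0"
    using anchored_generator_le[OF adm g, of m' j'] anchored_generator_le[OF adm g', of m j] assms gj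
    by simp
  then have "m = m'" using admissible_coord_inj[OF adm] assms by blast
  moreover have "j = j'"
  proof (rule ccontr)
    assume "j \<noteq> j'"
    then have "g $ j' < r m $ j'" using g assms(7) by (simp add: anchored_generator_def)
    with gj(2) \<open>m = m'\<close> show False by simp
  qed
  ultimately show ?thesis ..
qed

lemma generator_on_axis:
  assumes adm: "admissible rho r"
  shows "\<exists>g \<in> generators (record_region rho r). \<forall>l. l \<noteq> j0 \<longrightarrow> g $ l = 0"
proof -
  define M where "M = Max (coord_values rho r j0)"
  define c where "c = (\<chi> l. if l = j0 then M else 0)"
  have "M < 1" using admissible_coord_bounds[OF adm] by (auto simp: M_def coord_values_def)
  moreover have "0 \<le> M" "\<And>i. i < rho \<Longrightarrow> r i $ j0 \<le> M"
    by (simp_all add: M_def)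
  ultimately have "c \<in> record_region rho r"
    by (auto simp: mem_record_region c_def intro!: exI[of _ j0])
  then obtain g where g: "g \<in> generators (record_region rho r)" "g \<le> c"
    using exists_generator_below by blast
  have "g $ l = 0" if "l \<noteq> j0" for l
  proof -
    have "0 \<le> g $ l" using g(1) record_region_nonneg[of g rho r l] by (simp add: mem_generators)
    moreover have "g $ l \<le> c $ l" using g(2) by (simp add: less_eq_vec_def)
    ultimately show ?thesis using that by (simp add: c_def)
  qed
  with g(1) show ?thesis by blast
qed

theorem card_generators_ge:
  fixes r :: "nat \<Rightarrow> real^'n"
  assumes adm: "admissible rho r"
  shows "(CARD('n) - 1) * rho + 1 \<le> card (generators (record_region rho r))"
proof -
  obtain j0 :: 'n where True by blast
  define D where "D = {..<rho} \<times> (UNIV - {j0})"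
  define G where "G p = (SOME g. anchored_generator rho r j0 (fst p) (snd p) g)" for p
  have G: "anchored_generator rho r j0 m j (G (m, j))" if "(m, j) \<in> D" for m j
    using someI_ex[OF anchored_generator_exists[OF adm]] that by (simp add: G_def D_def)
  have "inj_on G D"
  proof (rule inj_onI)
    fix p q assume pq: "p \<in> D" "q \<in> D" "G p = G q"
    obtain m j m' j' where p: "p = (m, j)" and q: "q = (m', j')" by fastforce
    have "m = m' \<and> j = j'"
    proof (rule anchored_generator_inj[OF adm])
      show "anchored_generator rho r j0 m j (G p)" using G pq(1) p by simp
      show "anchored_generator rho r j0 m' j' (G p)" using G pq(2,3) q by simp
    qed (use pq p q in \<open>auto simp: D_def\<close>)
    then show "p = q" using p q by simp
  qed
  obtain g0 where g0: "g0 \<in> generators (record_region rho r)" "\<forall>l. l \<noteq> j0 \<longrightarrow> g0 $ l = 0"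
    using generator_on_axis[OF adm] by blast
  have "g0 \<notin> G ` D"
  proof
    assume "g0 \<in> G ` D"
    then obtain m j where "(m, j) \<in> D" "g0 = G (m, j)" by auto
    then show False
      using G[of m j] g0(2) admissible_coord_bounds[OF adm, of m j]
      by (auto simp: D_def anchored_generator_def)
  qed
  moreover have "insert g0 (G ` D) \<subseteq> generators (record_region rho r)"
    using g0(1) G by (auto simp: D_def anchored_generator_def)
  ultimately have "card (insert g0 (G ` D)) \<le> card (generators (record_region rho r))"
    using finite_generators by (intro card_mono) auto
  moreover have "card (insert g0 (G ` D)) = (CARD('n) - 1) * rho + 1"
    using \<open>g0 \<notin> G ` D\<close> \<open>inj_on G D\<close>
    by (simp add: D_def card_image card_cartesian_product card_Diff_singleton)
  ultimately show ?thesis by simp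
qed

lemma generators_sparse_if_coherent:
  assumes coherent: "\<And>i i' k k'. i < rho \<Longrightarrow> i' < rho \<Longrightarrow> k \<noteq> j1 \<Longrightarrow> k' \<noteq> j1 \<Longrightarrow>
      r i $ k < r i' $ k \<Longrightarrow> r i $ k' < r i' $ k'"
    and x: "x \<in> generators (record_region rho r)"
    and k: "k \<noteq> j1" "0 < x $ k" and k': "k' \<noteq> j1" "0 < x $ k'"
  shows "k = k'"
proof (rule ccontr)
  assume "k \<noteq> k'"
  obtain i where i: "i < rho" "x $ k = r i $ k" "\<forall>l. l \<noteq> k \<longrightarrow> x $ l < r i $ l"
    using generator_tight[OF x k(2)] by blast
  obtain i' where i': "i' < rho" "x $ k' = r i' $ k'" "\<forall>l. l \<noteq> k' \<longrightarrow> x $ l < r i' $ l"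
    using generator_tight[OF x k'(2)] by blast
  have "r i $ k < r i' $ k" using i(2) i'(3) \<open>k \<noteq> k'\<close> by auto
  then have "r i $ k' < r i' $ k'" using coherent i(1) i'(1) k(1) k'(1) by blast
  moreover have "r i' $ k' < r i $ k'" using i'(2) i(3) \<open>k \<noteq> k'\<close> by auto
  ultimately show False by simp
qed

text \<open>Generators are an antichain, so two of them that agree off j1 coincide. Hence there is
  at most one generator vanishing off j1, and a generator with a single positive coordinate
  k \<noteq> j1 is determined by the point r i supplying that coordinate.\<close>
lemma card_generators_le_if_sparse:
  fixes r :: "nat \<Rightarrow> real^'n"
  assumes sparse: "\<And>x k k'. x \<in> generators (record_region rho r) \<Longrightarrow> k \<noteq> j1 \<Longrightarrow> k' \<noteq> j1 \<Longrightarrow>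
      0 < x $ k \<Longrightarrow> 0 < x $ k' \<Longrightarrow> k = k'"
  shows "card (generators (record_region rho r)) \<le> (CARD('n) - 1) * rho + 1"
proof -
  let ?G = "generators (record_region rho r)"
  have nonneg: "0 \<le> x $ l" if "x \<in> ?G" for x l
    using that record_region_nonneg[of x rho r l] by (simp add: mem_generators)
  define B where "B = {x \<in> ?G. \<exists>k. k \<noteq> j1 \<and> 0 < x $ k}"
  define D where "D = {..<rho} \<times> (UNIV - {j1})"
  define idx where "idx x = (SOME p. p \<in> D \<and> 0 < x $ snd p \<and> x $ snd p = r (fst p) $ snd p)" for x
  have idx: "idx x \<in> D \<and> 0 < x $ snd (idx x) \<and> x $ snd (idx x) = r (fst (idx x)) $ snd (idx x)"
    if xB: "x \<in> B" for x
  proof -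
    obtain k where k: "k \<noteq> j1" "0 < x $ k" and x: "x \<in> ?G" using xB unfolding B_def by blast
    obtain i where "i < rho" "x $ k = r i $ k" using generator_tight[OF x k(2)] by blast
    then have "\<exists>p. p \<in> D \<and> 0 < x $ snd p \<and> x $ snd p = r (fst p) $ snd p"
      using k by (intro exI[of _ "(i, k)"]) (simp add: D_def)
    then show ?thesis unfolding idx_def by (rule someI_ex)
  qed
  have zero_off: "x $ l = 0" if "x \<in> ?G" "k \<noteq> j1" "0 < x $ k" "l \<noteq> j1" "l \<noteq> k" for x k l
  proof -
    have "\<not> 0 < x $ l" using sparse[OF that(1) that(4,2)] that(3,5) by blast
    then show ?thesis using nonneg[OF that(1), of l] by simp
  qed
  have "inj_on idx B"
  proof (rule inj_onI)
    fix x y assume x: "x \<in> B" and y: "y \<in> B" and eq: "idx x = idx y"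
    obtain i k where ik: "idx x = (i, k)" by fastforce
    have k: "k \<noteq> j1" "0 < x $ k" "0 < y $ k" "x $ k = y $ k"
      using idx[OF x] idx[OF y] eq ik by (auto simp: D_def)
    have "x $ l = y $ l" if "l \<noteq> j1" for l
    proof (cases "l = k")
      case False
      then show ?thesis using zero_off[of x k l] zero_off[of y k l] x y k that by (simp add: B_def)
    qed (use k in simp)
    then show "x = y"
      using x y by (intro generators_eq_if_agree_off[of x "record_region rho r" y j1]) (auto simp: B_def)
  qed
  moreover have "idx ` B \<subseteq> D" using idx by blast
  ultimately have "card B \<le> card D" by (rule card_inj_on_le) (simp add: D_def)
  moreover have "card (?G - B) \<le> Suc 0"
  proof (subst card_le_Suc0_iff_eq)
    show "finite (?G - B)" by (rule finite_Diff[OF finite_generators])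
    have "x $ l = 0" if "x \<in> ?G - B" "l \<noteq> j1" for x l
      using that nonneg[of x l] by (force simp: B_def)
    then show "\<forall>x \<in> ?G - B. \<forall>y \<in> ?G - B. x = y"
      using generators_eq_if_agree_off[of _ _ _ j1] by (metis DiffD1)
  qed
  moreover have "card ?G \<le> card B + card (?G - B)"
  proof -
    have "?G = B \<union> (?G - B)" by (auto simp: B_def)
    then show ?thesis by (metis card_Un_le)
  qed
  moreover have "card D = (CARD('n) - 1) * rho"
    by (simp add: D_def card_cartesian_product card_Diff_singleton)
  ultimately show ?thesis by simp
qed

text \<open>The points r i, i < rho, have coordinate j1 decreasing and all other coordinates
  increasing in i. Coordinate k of r i is obtained from the code d * a i k + f k, where f
  enumerates the coordinates, so distinct pairs (i, k) give distinct values.\<close>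
lemma exists_admissible_coherent:
  assumes "2 \<le> CARD('n) \<or> rho \<le> 1"
  shows "\<exists>(r :: nat \<Rightarrow> real^'n) j1. admissible rho r \<and>
           (\<forall>i i' k k'. i < rho \<longrightarrow> i' < rho \<longrightarrow> k \<noteq> j1 \<longrightarrow> k' \<noteq> j1 \<longrightarrow>
              r i $ k < r i' $ k \<longrightarrow> r i $ k' < r i' $ k')"
proof -
  define d where "d = CARD('n)"
  have d: "0 < d" by (simp add: d_def)
  obtain f where f: "bij_betw f (UNIV :: 'n set) {0..<d}"
    using ex_bij_betw_finite_nat[of "UNIV :: 'n set"] by (auto simp: d_def)
  then have f_less: "f k < d" and f_inj: "f k = f k' \<Longrightarrow> k = k'" for k k'
    by (auto simp: bij_betw_def inj_on_def)
  obtain j1 :: 'n where True by blast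
  define a where "a i k = (if k = j1 then rho - 1 - i else i)" for i and k :: 'n
  define c where "c i k = d * a i k + f k" for i k
  define r :: "nat \<Rightarrow> real^'n" where "r i = (\<chi> k. real (c i k + 1) / real (d * rho + 1))" for i
  have scale: "0 < real (d * rho + 1)" by (rule of_nat_0_less_iff[THEN iffD2]) simp
  have r_less: "r i $ k < r i' $ k' \<longleftrightarrow> c i k < c i' k'" for i i' k k'
    using scale by (simp add: r_def divide_less_cancel del: of_nat_add)
  have r_eq: "r i $ k = r i' $ k' \<longleftrightarrow> c i k = c i' k'" for i i' k k'
    using scale by (simp add: r_def del: of_nat_add)
  have c_less: "c i k < d * rho" if "i < rho" for i k
  proof -
    have "a i k + 1 \<le> rho" using that by (auto simp: a_def)
    then have "d * (a i k + 1) \<le> d * rho" by (rule mult_le_mono2)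
    then show ?thesis using f_less[of k] by (simp add: c_def algebra_simps)
  qed
  have c_inj: "i = i' \<and> k = k'" if "i < rho" "i' < rho" "c i k = c i' k'" for i i' k k'
  proof -
    have "c i k mod d = f k" "c i' k' mod d = f k'" using f_less by (simp_all add: c_def)
    then have "k = k'" using that(3) f_inj by simp
    moreover have "c i k div d = a i k" "c i' k' div d = a i' k'" using f_less d by (simp_all add: c_def)
    then have "a i k = a i' k'" using that(3) by simp
    ultimately show ?thesis using that(1,2) by (auto simp: a_def split: if_splits)
  qed
  have increasing: "r i $ k < r i' $ k \<longleftrightarrow> i < i'" if "k \<noteq> j1" for i i' k
    using that d by (simp add: r_less c_def a_def)
  have decreasing: "r i $ j1 < r i' $ j1 \<longleftrightarrow> i' < i" if "i < rho" "i' < rho" for i i'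
    using that d by (auto simp: r_less c_def a_def)
  have "\<not> r i \<le> r i'" if "i < rho" "i' < rho" "i \<noteq> i'" for i i'
  proof (cases "i < i'")
    case True
    then have "r i' $ j1 < r i $ j1" using decreasing that by simp
    then show ?thesis by (auto simp: less_eq_vec_def not_le)
  next
    case False
    have "UNIV \<noteq> {j1}"
    proof
      assume "UNIV = {j1}"
      then have "CARD('n) = card {j1}" by (rule arg_cong)
      then have "CARD('n) = 1" by simp
      with assms that show False by auto
    qed
    then obtain k where "k \<noteq> j1" by blast
    then have "r i' $ k < r i $ k" using increasing False that(3) by simp
    then show ?thesis by (auto simp: less_eq_vec_def not_le)
  qed
  moreover have "0 < r i $ k \<and> r i $ k < 1" if "i < rho" for i k
  proof -
    have "real (c i k + 1) < real (d * rho + 1)"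
      using c_less[OF that, of k] by (simp only: of_nat_less_iff add_less_cancel_right)
    then show ?thesis using scale by (simp add: r_def)
  qed
  ultimately have "admissible rho r"
    unfolding admissible_def vle_iff_less_eq
  proof (intro conjI allI impI)
    fix i i' and k k' :: 'n assume "i < rho" "i' < rho" "(i, k) \<noteq> (i', k')"
    then show "r i $ k \<noteq> r i' $ k'" using c_inj by (auto simp: r_eq)
  qed auto
  moreover have "r i $ k' < r i' $ k'" if "k \<noteq> j1" "k' \<noteq> j1" "r i $ k < r i' $ k" for i i' k k'
    using that increasing by simp
  ultimately show ?thesis by blast
qed

lemma admissible_card_ge_2:
  fixes r :: "nat \<Rightarrow> real^'n"
  assumes "admissible rho r" "2 \<le> rho"
  shows "2 \<le> CARD('n)"
proof (rule ccontr)
  assume "\<not> 2 \<le> CARD('n)"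
  moreover have "0 < CARD('n)" by simp
  ultimately have "CARD('n) = 1" by linarith
  then obtain u :: 'n where u: "UNIV = {u}" using card_1_singletonE by blast
  have "r 0 \<le> r 1 \<or> r 1 \<le> r 0"
  proof (cases "r 0 $ u \<le> r 1 $ u")
    case True
    then show ?thesis using u unfolding less_eq_vec_def by (metis UNIV_I singletonD)
  next
    case False
    then show ?thesis using u unfolding less_eq_vec_def by (metis UNIV_I singletonD nle_le)
  qed
  then show False using assms by (auto simp: admissible_def)
qed

theorem theoremT:
  fixes rho :: nat
  shows "(\<forall>r :: nat \<Rightarrow> real^'n. admissible rho r \<longrightarrow>
            card (generators (record_region rho r)) \<ge> (CARD('n) - 1) * rho + 1)
       \<and> ((\<exists>r :: nat \<Rightarrow> real^'n. admissible rho r) \<longrightarrow>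
            (\<exists>r :: nat \<Rightarrow> real^'n. admissible rho r \<and>
               card (generators (record_region rho r)) = (CARD('n) - 1) * rho + 1))"
proof (intro conjI allI impI)
  fix r :: "nat \<Rightarrow> real^'n"
  assume "admissible rho r"
  then show "card (generators (record_region rho r)) \<ge> (CARD('n) - 1) * rho + 1"
    by (rule card_generators_ge)
next
  assume "\<exists>r :: nat \<Rightarrow> real^'n. admissible rho r"
  then have "2 \<le> CARD('n) \<or> rho \<le> 1" using admissible_card_ge_2 by force
  then obtain r :: "nat \<Rightarrow> real^'n" and j1 where adm: "admissible rho r"
    and coherent: "\<forall>i i' k k'. i < rho \<longrightarrow> i' < rho \<longrightarrow> k \<noteq> j1 \<longrightarrow> k' \<noteq> j1 \<longrightarrow>
                     r i $ k < r i' $ k \<longrightarrow> r i $ k' < r i' $ k'"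
    using exists_admissible_coherent by blast
  have "card (generators (record_region rho r)) \<le> (CARD('n) - 1) * rho + 1"
    using generators_sparse_if_coherent[of rho j1 r] coherent
    by (intro card_generators_le_if_sparse[of rho r j1]) blast
  with card_generators_ge[OF adm] adm
  show "\<exists>r :: nat \<Rightarrow> real^'n. admissible rho r \<and>
          card (generators (record_region rho r)) = (CARD('n) - 1) * rho + 1"
    by (intro exI[of _ r]) simp
qed

end
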